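(* Let $P,Q$ be finite posets, $R$ an indecomposable commutative unital ring, and $\Phi:I^3(P,R)\to I^3(Q,R)$ an $R$-linear algebra isomorphism. Then for all $x<y$ in $P$ with $l(x,y)=1$ there exist $u<v$ in $Q$ with $l(u,v)=1$ and $\sigma_{xy}\in J^3_2(Q,R)$ such that $\Phi(e_{xxy}+e_{xyy})=e_{uuv}+e_{uvv}+\sigma_{xy}$.
   Context: A commutative ring is indecomposable if its only idempotents are $0$ and $1$. For a finite poset $P$, $P^3_\le=\{(x,y,z)\in P^3: x\le y\le z\}$, and $I^3(P,R)$ is the $R$-module of functions $f:P^3_\le\to R$ with multiplication $(fg)(x_1,x_2,x_3)=\sum f(x_1,y_1,y_2)g(y_1,y_2,x_3)$ over all $x_1\le y_1\le x_2\le y_2\le x_3$. For $x\le y\le z$, $e_{xyz}$ is the function equal to $1$ at $(x,y,z)$ and $0$ elsewhere. For $a\le b$, $l(a,b)$ is the maximum of $|C|-1$ over chains $C$ in the interval $[a,b]$. $J^3_2(Q,R)=\{f\in I^3(Q,R): f(x_1,x_2,x_3)=0 \text{ whenever } l(x_1,x_3)<2\}$. *)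

theory Defs
  imports Main
begin

definition I3 :: "('a::{order,finite} \<times> 'a \<times> 'a \<Rightarrow> 'r::comm_ring_1) set" where
  "I3 = {f. \<forall>x y z. \<not> (x \<le> y \<and> y \<le> z) \<longrightarrow> f (x, y, z) = 0}"

definition mult3 ::
  "('a::{order,finite} \<times> 'a \<times> 'a \<Rightarrow> 'r::comm_ring_1) \<Rightarrow> ('a \<times> 'a \<times> 'a \<Rightarrow> 'r) \<Rightarrow> ('a \<times> 'a \<times> 'a \<Rightarrow> 'r)" where
  "mult3 f g = (\<lambda>(x1, x2, x3).
     \<Sum>(y1, y2) \<in> {(y1, y2). x1 \<le> y1 \<and> y1 \<le> x2 \<and> x2 \<le> y2 \<and> y2 \<le> x3}.
        f (x1, y1, y2) * g (y1, y2, x3))"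

definition e3 :: "'a::{order,finite} \<Rightarrow> 'a \<Rightarrow> 'a \<Rightarrow> ('a \<times> 'a \<times> 'a \<Rightarrow> 'r::comm_ring_1)" where
  "e3 x y z = (\<lambda>t. if t = (x, y, z) then 1 else 0)"

definition is_chain :: "'a::order set \<Rightarrow> bool" where
  "is_chain C \<longleftrightarrow> (\<forall>x\<in>C. \<forall>y\<in>C. x \<le> y \<or> y \<le> x)"

definition lng :: "'a::{order,finite} \<Rightarrow> 'a \<Rightarrow> nat" where
  "lng a b = Max ((\<lambda>C. card C - 1) ` {C. C \<subseteq> {z. a \<le> z \<and> z \<le> b} \<and> is_chain C})"

definition J32 :: "('a::{order,finite} \<times> 'a \<times> 'a \<Rightarrow> 'r::comm_ring_1) set" where
  "J32 = {f \<in> I3. \<forall>x1 x2 x3. lng x1 x3 < 2 \<longrightarrow> f (x1, x2, x3) = 0}"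

definition indecomposable :: "'r::comm_ring_1 itself \<Rightarrow> bool" where
  "indecomposable _ \<longleftrightarrow> (\<forall>e::'r. e * e = e \<longrightarrow> e = 0 \<or> e = 1)"

definition alg_iso3 ::
  "(('a::{order,finite} \<times> 'a \<times> 'a \<Rightarrow> 'r::comm_ring_1) \<Rightarrow> ('b::{order,finite} \<times> 'b \<times> 'b \<Rightarrow> 'r)) \<Rightarrow> bool" where
  "alg_iso3 \<Phi> \<longleftrightarrow> bij_betw \<Phi> I3 I3 \<and>
     (\<forall>f\<in>I3. \<forall>g\<in>I3. \<Phi> (\<lambda>t. f t + g t) = (\<lambda>t. \<Phi> f t + \<Phi> g t)) \<and>
     (\<forall>f\<in>I3. \<forall>c::'r. \<Phi> (\<lambda>t. c * f t) = (\<lambda>t. c * \<Phi> f t)) \<and>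
     (\<forall>f\<in>I3. \<forall>g\<in>I3. \<Phi> (mult3 f g) = mult3 (\<Phi> f) (\<Phi> g))"

end

(*
  Put s = e_xxy + e_xyy for a covering pair x < y of P and S = Phi s.  In I^3(P, R) the element s
  is idempotent, s = e_xxx s + s e_yyy with s e_xxx = 0 = e_yyy s, and it satisfies the sandwich
  identities s (g s) = g(x,x,y) s and, when g(x,x,x) = 0, s ((g s) s) = s (g s).  Transported by
  Phi, the first facts make S an idempotent with zero diagonal.  Choose an interval [a, c] of Q
  that is minimal among those with S(a, t, c) <> 0 for some t.  Expanding S = S S over [a, c]
  shows that S(a, t, c) is one idempotent of R for all t in [a, c], hence equal to 1.  The second
  sandwich identity, applied to the preimage of e_aab, rules out any b strictly between a and c;
  the first, applied to the preimage of e_aac, shows that S vanishes above every other covering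
  pair.  So S - e_aac - e_acc vanishes wherever l(x1, x3) < 2, i.e. it lies in J^3_2(Q, R).
*)
theory Submission
  imports Defs
begin

section \<open>The product of I3\<close>

lemma mult3_apply:
  "mult3 f g (x1, x2, x3) =
     (\<Sum>(y1, y2) \<in> {(y1, y2). x1 \<le> y1 \<and> y1 \<le> x2 \<and> x2 \<le> y2 \<and> y2 \<le> x3}.
        f (x1, y1, y2) * g (y1, y2, x3))"
  by (simp add: mult3_def)

lemma mult3_eq_single_term:
  fixes f g :: "'a::{order,finite} \<times> 'a \<times> 'a \<Rightarrow> 'r::comm_ring_1"
  assumes "x1 \<le> p1" "p1 \<le> x2" "x2 \<le> p2" "p2 \<le> x3"
    and "\<And>y1 y2. x1 \<le> y1 \<Longrightarrow> y1 \<le> x2 \<Longrightarrow> x2 \<le> y2 \<Longrightarrow> y2 \<le> x3 \<Longrightarrow> (y1, y2) \<noteq> (p1, p2) \<Longrightarrow>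
           f (x1, y1, y2) * g (y1, y2, x3) = 0"
  shows "mult3 f g (x1, x2, x3) = f (x1, p1, p2) * g (p1, p2, x3)"
  unfolding mult3_apply
  by (subst sum.mono_neutral_cong_right[where S = "{(p1, p2)}"]) (use assms in auto)

lemma mult3_eq_0:
  fixes f g :: "'a::{order,finite} \<times> 'a \<times> 'a \<Rightarrow> 'r::comm_ring_1"
  assumes "\<And>y1 y2. x1 \<le> y1 \<Longrightarrow> y1 \<le> x2 \<Longrightarrow> x2 \<le> y2 \<Longrightarrow> y2 \<le> x3 \<Longrightarrow> f (x1, y1, y2) * g (y1, y2, x3) = 0"
  shows "mult3 f g (x1, x2, x3) = 0"
  unfolding mult3_apply by (rule sum.neutral) (use assms in auto)

lemma mult3_in_I3: "mult3 f g \<in> I3"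
  unfolding I3_def by (auto intro!: mult3_eq_0 dest: order_trans)

lemma e3_in_I3: "a \<le> b \<Longrightarrow> b \<le> c \<Longrightarrow> e3 a b c \<in> I3"
  unfolding I3_def e3_def by auto

lemma zero_in_I3: "(\<lambda>_. 0) \<in> I3"
  unfolding I3_def by simp

lemma I3_eq_0: "f \<in> I3 \<Longrightarrow> \<not> (x \<le> y \<and> y \<le> z) \<Longrightarrow> f (x, y, z) = 0"
  unfolding I3_def by blast

lemma mult3_diag: "mult3 f g (v, v, v) = f (v, v, v) * g (v, v, v)"
  by (rule mult3_eq_single_term) auto

lemma mult3_e3_left:
  "mult3 (e3 a b c) h =
     (\<lambda>(x1, x2, x3). if x1 = a \<and> a \<le> b \<and> b \<le> x2 \<and> x2 \<le> c \<and> c \<le> x3 then h (b, c, x3) else 0)"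
proof (intro ext, clarify)
  fix x1 x2 x3
  show "mult3 (e3 a b c) h (x1, x2, x3) =
          (if x1 = a \<and> a \<le> b \<and> b \<le> x2 \<and> x2 \<le> c \<and> c \<le> x3 then h (b, c, x3) else 0)"
  proof (cases "x1 = a \<and> a \<le> b \<and> b \<le> x2 \<and> x2 \<le> c \<and> c \<le> x3")
    case True
    then have "mult3 (e3 a b c) h (x1, x2, x3) = e3 a b c (x1, b, c) * h (b, c, x3)"
      by (intro mult3_eq_single_term) (auto simp: e3_def)
    with True show ?thesis by (simp add: e3_def)
  next
    case False
    then show ?thesis by (simp only: if_False, intro mult3_eq_0) (auto simp: e3_def)
  qed
qed

lemma mult3_e3_right:
  "mult3 h (e3 a b c) =
     (\<lambda>(x1, x2, x3). if x3 = c \<and> x1 \<le> a \<and> a \<le> x2 \<and> x2 \<le> b \<and> b \<le> c then h (x1, a, b) else 0)"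
proof (intro ext, clarify)
  fix x1 x2 x3
  show "mult3 h (e3 a b c) (x1, x2, x3) =
          (if x3 = c \<and> x1 \<le> a \<and> a \<le> x2 \<and> x2 \<le> b \<and> b \<le> c then h (x1, a, b) else 0)"
  proof (cases "x3 = c \<and> x1 \<le> a \<and> a \<le> x2 \<and> x2 \<le> b \<and> b \<le> c")
    case True
    then have "mult3 h (e3 a b c) (x1, x2, x3) = h (x1, a, b) * e3 a b c (a, b, x3)"
      by (intro mult3_eq_single_term) (auto simp: e3_def)
    with True show ?thesis by (simp add: e3_def)
  next
    case False
    then show ?thesis by (simp only: if_False, intro mult3_eq_0) (auto simp: e3_def)
  qed
qed

lemma mult3_add_left: "mult3 (\<lambda>t. f t + g t) h = (\<lambda>t. mult3 f h t + mult3 g h t)"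
  unfolding mult3_def by (auto simp: distrib_right sum.distrib split_def)

lemma mult3_add_right: "mult3 f (\<lambda>t. g t + h t) = (\<lambda>t. mult3 f g t + mult3 f h t)"
  unfolding mult3_def by (auto simp: distrib_left sum.distrib split_def)

lemma diag_eq_0_if_split:
  assumes "s = (\<lambda>t. mult3 d s t + mult3 s e t)" "mult3 s d = (\<lambda>_. 0)" "mult3 e s = (\<lambda>_. 0)"
  shows "s (v, v, v) = 0"
proof -
  have "s (v, v, v) = d (v, v, v) * s (v, v, v) + s (v, v, v) * e (v, v, v)"
    by (subst assms(1)) (simp only: mult3_diag)
  moreover have "s (v, v, v) * d (v, v, v) = 0" "e (v, v, v) * s (v, v, v) = 0"
    using fun_cong[OF assms(2), of "(v, v, v)"] fun_cong[OF assms(3), of "(v, v, v)"]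
    by (simp_all only: mult3_diag)
  ultimately show ?thesis by (simp add: mult.commute)
qed

lemma diag_eq_0_if_absorbed:
  assumes "mult3 d s = s" "mult3 s d = (\<lambda>_. 0)"
  shows "s (v, v, v) = 0"
proof -
  have "s (v, v, v) = d (v, v, v) * s (v, v, v)" "s (v, v, v) * d (v, v, v) = 0"
    using fun_cong[OF assms(1), of "(v, v, v)"] fun_cong[OF assms(2), of "(v, v, v)"]
    by (simp_all only: mult3_diag)
  then show ?thesis by (simp add: mult.commute)
qed

section \<open>Covering pairs and length\<close>

definition covered_by :: "'a::order \<Rightarrow> 'a \<Rightarrow> bool" where
  "covered_by x y \<longleftrightarrow> x < y \<and> (\<forall>t. x \<le> t \<longrightarrow> t \<le> y \<longrightarrow> t = x \<or> t = y)"

lemma covered_by_less: "covered_by x y \<Longrightarrow> x < y"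
  by (simp add: covered_by_def)

lemma covered_by_between: "covered_by x y \<Longrightarrow> x \<le> t \<Longrightarrow> t \<le> y \<Longrightarrow> t = x \<or> t = y"
  by (simp add: covered_by_def)

lemma finite_chain_lengths:
  "finite ((\<lambda>C. card C - 1) ` {C. C \<subseteq> {z::'a::{order,finite}. a \<le> z \<and> z \<le> b} \<and> is_chain C})"
  by simp

lemma lng_ge_card:
  fixes C :: "'a::{order,finite} set"
  assumes "C \<subseteq> {z. a \<le> z \<and> z \<le> b}" "is_chain C"
  shows "card C - 1 \<le> lng a b"
  unfolding lng_def by (rule Max_ge[OF finite_chain_lengths]) (use assms in blast)

lemma lng_ge_2:
  fixes a b c :: "'a::{order,finite}"
  assumes "a < b" "b < c"
  shows "2 \<le> lng a c"
proof -
  have "card {a, b, c} - 1 \<le> lng a c"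
    by (rule lng_ge_card) (use assms in \<open>auto simp: is_chain_def\<close>)
  moreover have "card {a, b, c} = 3" using assms by (auto simp: card_insert_if)
  ultimately show ?thesis by simp
qed

lemma lng_less_2_cases:
  fixes a c :: "'a::{order,finite}"
  assumes "lng a c < 2" "a \<le> c"
  shows "a = c \<or> covered_by a c"
proof (cases "a = c")
  case False
  with assms(2) have "a < c" by simp
  moreover have "t = a \<or> t = c" if "a \<le> t" "t \<le> c" for t
    using lng_ge_2[of a t c] assms(1) that by force
  ultimately show ?thesis unfolding covered_by_def by blast
qed simp

lemma lng_eq_1_iff: "lng x y = 1 \<longleftrightarrow> covered_by x (y::'a::{order,finite})"
proof
  let ?L = "(\<lambda>C. card C - 1) ` {C. C \<subseteq> {z. x \<le> z \<and> z \<le> y} \<and> is_chain C}"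
  assume lng1: "lng x y = 1"
  have "Max ?L \<in> ?L"
    by (rule Max_in[OF finite_chain_lengths]) (auto simp: is_chain_def)
  then have "1 \<in> ?L" using lng1 unfolding lng_def by simp
  then obtain C where C: "C \<subseteq> {z. x \<le> z \<and> z \<le> y}" "card C = 2" by force
  then obtain c d where "C = {c, d}" "c \<noteq> d" by (auto simp: card_2_iff)
  with C(1) have "x < y" by (auto simp: order.strict_iff_order)
  moreover have "t = x \<or> t = y" if "x \<le> t" "t \<le> y" for t
    using lng_ge_2[of x t y] that lng1 by force
  ultimately show "covered_by x y" unfolding covered_by_def by blast
next
  let ?L = "(\<lambda>C. card C - 1) ` {C. C \<subseteq> {z. x \<le> z \<and> z \<le> y} \<and> is_chain C}"
  assume cov: "covered_by x y"
  have upper: "n \<le> 1" if "n \<in> ?L" for n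
  proof -
    from that obtain C where C: "C \<subseteq> {z. x \<le> z \<and> z \<le> y}" "n = card C - 1" by blast
    with cov have "C \<subseteq> {x, y}" unfolding covered_by_def by blast
    then have "card C \<le> card {x, y}" by (intro card_mono) auto
    moreover have "card {x, y} \<le> 2" by (cases "x = y") auto
    ultimately show "n \<le> 1" using C(2) by linarith
  qed
  have "card {x, y} - 1 \<in> ?L"
    using cov unfolding covered_by_def is_chain_def by (intro imageI CollectI) auto
  moreover have "card {x, y} - 1 = 1"
    using cov unfolding covered_by_def by (simp add: less_imp_neq)
  ultimately have "1 \<in> ?L" by simp
  then show "lng x y = 1"
    unfolding lng_def using upper by (intro Max_eqI finite_chain_lengths)
qed

section \<open>The element e_xxy + e_xyy\<close>

definition edge3 :: "'a::{order,finite} \<Rightarrow> 'a \<Rightarrow> 'a \<times> 'a \<times> 'a \<Rightarrow> 'r::comm_ring_1" where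
  "edge3 x y = (\<lambda>t. e3 x x y t + e3 x y y t)"

lemma edge3_apply: "edge3 x y t = e3 x x y t + e3 x y y t"
  by (simp add: edge3_def)

lemma edge3_in_I3: "x \<le> y \<Longrightarrow> edge3 x y \<in> I3"
  unfolding edge3_def I3_def e3_def by auto

lemma edge3_nonzero: "x \<noteq> y \<Longrightarrow> edge3 x y \<noteq> (\<lambda>_. 0)"
  using fun_cong[of "edge3 x y" "\<lambda>_. 0" "(x, x, y)"] by (auto simp: edge3_apply e3_def)

context
  fixes x y :: "'a::{order,finite}"
  assumes cov: "covered_by x y"
begin

private lemma xy: "x \<le> y" "x \<noteq> y" "\<not> y \<le> x"
  using cov by (auto simp: covered_by_def)

private lemmas between = covered_by_between[OF cov]

lemma mult3_edge3_left:
  "mult3 (edge3 x y) h =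
     (\<lambda>(x1, x2, x3). (if x1 = x \<and> x \<le> x2 \<and> x2 \<le> y \<and> y \<le> x3 then h (x, y, x3) else 0)
        + (if x1 = x \<and> x2 = y \<and> y \<le> x3 then h (y, y, x3) else 0))"
  using xy unfolding edge3_def mult3_add_left mult3_e3_left
  by (intro ext) (auto split: prod.splits)

lemma mult3_edge3_right:
  "mult3 h (edge3 x y) =
     (\<lambda>(x1, x2, x3). (if x3 = y \<and> x1 \<le> x \<and> x2 = x then h (x1, x, x) else 0)
        + (if x3 = y \<and> x1 \<le> x \<and> x \<le> x2 \<and> x2 \<le> y then h (x1, x, y) else 0))"
  using xy unfolding edge3_def mult3_add_right mult3_e3_right
  by (intro ext) (auto split: prod.splits)

lemma mult3_edge3_idem: "mult3 (edge3 x y) (edge3 x y) = edge3 x y"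
proof (intro ext, clarify)
  fix x1 x2 x3
  show "mult3 (edge3 x y) (edge3 x y) (x1, x2, x3) = edge3 x y (x1, x2, x3)"
    unfolding mult3_edge3_left using xy between[of x2] by (auto simp: edge3_apply e3_def)
qed

lemma edge3_split:
  "edge3 x y = (\<lambda>t. mult3 (e3 x x x) (edge3 x y) t + mult3 (edge3 x y) (e3 y y y) t)"
proof (intro ext, clarify)
  fix x1 x2 x3
  show "edge3 x y (x1, x2, x3) =
      mult3 (e3 x x x) (edge3 x y) (x1, x2, x3) + mult3 (edge3 x y) (e3 y y y) (x1, x2, x3)"
    unfolding mult3_e3_left mult3_e3_right using xy between[of x2]
    by (auto simp: edge3_apply e3_def)
qed

lemma mult3_edge3_e3_bottom_eq_0: "mult3 (edge3 x y) (e3 x x x) = (\<lambda>_. 0)"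
proof (intro ext, clarify)
  fix x1 x2 x3
  show "mult3 (edge3 x y) (e3 x x x) (x1, x2, x3) = 0"
    unfolding mult3_e3_right using xy by (auto simp: edge3_apply e3_def)
qed

lemma mult3_e3_top_edge3_eq_0: "mult3 (e3 y y y) (edge3 x y) = (\<lambda>_. 0)"
proof (intro ext, clarify)
  fix x1 x2 x3
  show "mult3 (e3 y y y) (edge3 x y) (x1, x2, x3) = 0"
    unfolding mult3_e3_left using xy by (auto simp: edge3_apply e3_def)
qed

lemma mult3_edge3_sandwich:
  "mult3 (edge3 x y) (mult3 g (edge3 x y)) = (\<lambda>t. g (x, x, y) * edge3 x y t)"
proof (intro ext, clarify)
  fix x1 x2 x3
  show "mult3 (edge3 x y) (mult3 g (edge3 x y)) (x1, x2, x3) = g (x, x, y) * edge3 x y (x1, x2, x3)"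
    unfolding mult3_edge3_left mult3_edge3_right using xy between[of x2]
    by (auto simp: edge3_apply e3_def)
qed

(* Multiplication in I^3 is not associative, so this does not follow from idempotence;
   the hypothesis on g is needed. *)
lemma mult3_edge3_sandwich_right:
  assumes "g (x, x, x) = 0"
  shows "mult3 (edge3 x y) (mult3 (mult3 g (edge3 x y)) (edge3 x y)) =
    mult3 (edge3 x y) (mult3 g (edge3 x y))"
proof (intro ext, clarify)
  fix x1 x2 x3
  show "mult3 (edge3 x y) (mult3 (mult3 g (edge3 x y)) (edge3 x y)) (x1, x2, x3) =
      mult3 (edge3 x y) (mult3 g (edge3 x y)) (x1, x2, x3)"
    unfolding mult3_edge3_left mult3_edge3_right using xy assms between[of x2]
    by (auto simp: edge3_apply e3_def)
qed

end

section \<open>Idempotents with zero diagonal\<close>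

definition min_support_interval :: "('a::order \<times> 'a \<times> 'a \<Rightarrow> 'r::zero) \<Rightarrow> 'a \<Rightarrow> 'a \<Rightarrow> bool" where
  "min_support_interval S a c \<longleftrightarrow> (\<exists>t. S (a, t, c) \<noteq> 0) \<and>
     (\<forall>a' t c'. S (a', t, c') \<noteq> 0 \<longrightarrow> a \<le> a' \<longrightarrow> c' \<le> c \<longrightarrow> a' = a \<and> c' = c)"

lemma min_support_intervalD:
  "min_support_interval S a c \<Longrightarrow> S (a', t, c') \<noteq> 0 \<Longrightarrow> a \<le> a' \<Longrightarrow> c' \<le> c \<Longrightarrow> a' = a \<and> c' = c"
  unfolding min_support_interval_def by blast

lemma ex_min_support_interval:
  fixes S :: "'a::{order,finite} \<times> 'a \<times> 'a \<Rightarrow> 'r::comm_ring_1"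
  assumes "S \<in> I3" "S \<noteq> (\<lambda>_. 0)"
  shows "\<exists>a c. min_support_interval S a c"
proof -
  define P where "P = (\<lambda>(a, c). \<exists>t. S (a, t, c) \<noteq> 0)"
  define m :: "'a \<times> 'a \<Rightarrow> nat" where "m = (\<lambda>(a, c). card {z. a \<le> z \<and> z \<le> c})"
  obtain a0 t0 c0 where "S (a0, t0, c0) \<noteq> 0" using assms(2) by fastforce
  then have "P (a0, c0)" unfolding P_def by auto
  then obtain a c where P_ac: "P (a, c)" and least: "\<And>q. P q \<Longrightarrow> m (a, c) \<le> m q"
    using ex_has_least_nat[of P _ m] by (metis surj_pair)
  then obtain t where "S (a, t, c) \<noteq> 0" unfolding P_def by auto
  then have "a \<le> t" "t \<le> c" using I3_eq_0[OF assms(1)] by blast+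
  have "a' = a \<and> c' = c" if "S (a', t', c') \<noteq> 0" "a \<le> a'" "c' \<le> c" for a' t' c'
  proof -
    have sub: "{z. a' \<le> z \<and> z \<le> c'} \<subseteq> {z. a \<le> z \<and> z \<le> c}"
      using that(2,3) order_trans by blast
    have "card {z. a \<le> z \<and> z \<le> c} \<le> card {z. a' \<le> z \<and> z \<le> c'}"
      using least[of "(a', c')"] that(1) unfolding P_def m_def by auto
    then have "{z. a' \<le> z \<and> z \<le> c'} = {z. a \<le> z \<and> z \<le> c}"
      using card_subset_eq[OF _ sub] card_mono[OF _ sub] by auto
    then have "a' \<le> a" "c \<le> c'" using \<open>a \<le> t\<close> \<open>t \<le> c\<close> by (auto dest: order_trans)
    with that(2,3) show ?thesis by auto
  qed
  with \<open>S (a, t, c) \<noteq> 0\<close> show ?thesis unfolding min_support_interval_def by blast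
qed

lemma mult3_at_min_support_left:
  assumes "min_support_interval S a c" "a \<le> c"
  shows "mult3 S H (a, a, c) = S (a, a, c) * H (a, c, c)"
proof (rule mult3_eq_single_term)
  fix y1 y2 assume "a \<le> y1" "y1 \<le> a" "a \<le> y2" "y2 \<le> c" "(y1, y2) \<noteq> (a, c)"
  then have "S (a, y1, y2) = 0" using min_support_intervalD[OF assms(1), of a y1 y2] by auto
  then show "S (a, y1, y2) * H (y1, y2, c) = 0" by simp
qed (use assms in auto)

lemma mult3_at_min_support_right:
  assumes "min_support_interval S a c" "a \<le> c"
  shows "mult3 H S (a, c, c) = H (a, a, c) * S (a, c, c)"
proof (rule mult3_eq_single_term)
  fix y1 y2 assume "a \<le> y1" "y1 \<le> c" "c \<le> y2" "y2 \<le> c" "(y1, y2) \<noteq> (a, c)"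
  then have "S (y1, y2, c) = 0" using min_support_intervalD[OF assms(1), of y1 y2 c] by auto
  then show "H (a, y1, y2) * S (y1, y2, c) = 0" by simp
qed (use assms in auto)

lemma mult3_self_at_min_support:
  assumes "min_support_interval S a c" "a \<le> t" "t \<le> c"
  shows "mult3 S S (a, t, c) = S (a, a, c) * S (a, c, c)"
proof (rule mult3_eq_single_term)
  fix y1 y2 assume y: "a \<le> y1" "y1 \<le> t" "t \<le> y2" "y2 \<le> c" "(y1, y2) \<noteq> (a, c)"
  show "S (a, y1, y2) * S (y1, y2, c) = 0"
  proof (cases "y2 = c")
    case True
    with y have "S (y1, y2, c) = 0" using min_support_intervalD[OF assms(1), of y1 y2 c] by blast
    then show ?thesis by simp
  next
    case False
    with y have "S (a, y1, y2) = 0" using min_support_intervalD[OF assms(1), of a y1 y2] by blast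
    then show ?thesis by simp
  qed
qed (use assms in auto)

locale zero_diag_idempotent =
  fixes S :: "'a::{order,finite} \<times> 'a \<times> 'a \<Rightarrow> 'r::comm_ring_1"
  assumes indecomposable: "indecomposable TYPE('r)"
    and in_I3: "S \<in> I3"
    and idem: "mult3 S S = S"
    and diag: "S (v, v, v) = 0"
begin

lemma min_support_block_eq_1:
  assumes "min_support_interval S a c" "a \<le> t" "t \<le> c"
  shows "S (a, t, c) = 1"
proof -
  define k where "k = S (a, a, c) * S (a, c, c)"
  have const: "S (a, t', c) = k" if "a \<le> t'" "t' \<le> c" for t'
    using mult3_self_at_min_support[OF assms(1) that] unfolding idem k_def .
  have "a \<le> c" using assms(2,3) by (rule order_trans)
  then have ka: "S (a, a, c) = k" and kc: "S (a, c, c) = k" using const by auto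
  have "k = k * k" using k_def unfolding ka kc .
  then have "k = 0 \<or> k = 1" using indecomposable unfolding indecomposable_def by metis
  moreover obtain t0 where "S (a, t0, c) \<noteq> 0"
    using assms(1) unfolding min_support_interval_def by blast
  then have "k \<noteq> 0" using const[of t0] I3_eq_0[OF in_I3] by blast
  ultimately show ?thesis using const[OF assms(2,3)] by simp
qed

lemma min_support_less:
  assumes "min_support_interval S a c"
  shows "a < c"
proof -
  obtain t where t: "S (a, t, c) \<noteq> 0" using assms unfolding min_support_interval_def by blast
  then have "a \<le> t" "t \<le> c" using I3_eq_0[OF in_I3] by blast+
  with t diag show ?thesis by (cases "a = c") auto
qed

lemma min_support_if_covered:
  assumes "S (a, t, c) \<noteq> 0" "covered_by a c"
  shows "min_support_interval S a c"
proof -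
  have "a' = a \<and> c' = c" if nz: "S (a', t', c') \<noteq> 0" and "a \<le> a'" "c' \<le> c" for a' t' c'
  proof -
    have "a' \<le> t'" "t' \<le> c'" using nz I3_eq_0[OF in_I3] by blast+
    then have "a' \<le> c'" by (rule order_trans)
    moreover have "a' \<noteq> c'" using nz diag \<open>a' \<le> t'\<close> \<open>t' \<le> c'\<close> by auto
    moreover have "a' = a \<or> a' = c"
      using covered_by_between[OF assms(2) that(2) order_trans[OF \<open>a' \<le> c'\<close> that(3)]] .
    moreover have "c' = a \<or> c' = c"
      using covered_by_between[OF assms(2) order_trans[OF that(2) \<open>a' \<le> c'\<close>] that(3)] .
    ultimately show ?thesis using that(2,3) by (metis order.antisym)
  qed
  with assms(1) show ?thesis unfolding min_support_interval_def by blast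
qed

lemma min_support_covered:
  assumes msi: "min_support_interval S a c"
    and sandwich: "\<And>b. a < b \<Longrightarrow> b < c \<Longrightarrow>
      mult3 S (mult3 (mult3 (e3 a a b) S) S) = mult3 S (mult3 (e3 a a b) S)"
  shows "covered_by a c"
proof -
  have "a < c" using msi by (rule min_support_less)
  then have "a \<le> c" by simp
  have one: "S (a, t, c) = 1" if "a \<le> t" "t \<le> c" for t
    using msi that by (rule min_support_block_eq_1)
  have "b = a \<or> b = c" if "a \<le> b" "b \<le> c" for b
  proof (rule ccontr)
    assume "\<not> (b = a \<or> b = c)"
    with that have "a < b" "b < c" by auto
    define GS where "GS = mult3 (e3 a a b) S"
    have GS_apply:
        "GS (z1, z2, z3) = (if z1 = a \<and> a \<le> z2 \<and> z2 \<le> b \<and> b \<le> z3 then S (a, b, z3) else 0)"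
      for z1 z2 z3 unfolding GS_def mult3_e3_left by simp
    have "mult3 S (mult3 GS S) (a, a, c) = S (a, a, c) * (GS (a, a, c) * S (a, c, c))"
      unfolding mult3_at_min_support_left[OF msi \<open>a \<le> c\<close>]
        mult3_at_min_support_right[OF msi \<open>a \<le> c\<close>] ..
    also have "\<dots> = 1" using GS_apply one \<open>a \<le> b\<close> \<open>b \<le> c\<close> \<open>a \<le> c\<close> by simp
    finally have "mult3 S (mult3 GS S) (a, a, c) = 1" .
    moreover have "mult3 S GS (a, a, c) = S (a, a, c) * GS (a, c, c)"
      using msi \<open>a \<le> c\<close> by (rule mult3_at_min_support_left)
    moreover have "GS (a, c, c) = 0" using GS_apply \<open>b < c\<close> by (simp add: less_le_not_le)
    ultimately show False using sandwich[OF \<open>a < b\<close> \<open>b < c\<close>] unfolding GS_def by simp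
  qed
  with \<open>a < c\<close> show ?thesis unfolding covered_by_def by blast
qed

lemma covered_support_unique:
  assumes msi: "min_support_interval S a c"
    and sandwich: "\<exists>\<kappa>. mult3 S (mult3 (e3 a a c) S) = (\<lambda>t. \<kappa> * S t)"
    and nz: "S (p, q, r) \<noteq> 0" and cov: "covered_by p r"
  shows "p = a \<and> r = c"
proof (rule ccontr)
  assume other: "\<not> (p = a \<and> r = c)"
  obtain \<kappa> where \<kappa>: "mult3 S (mult3 (e3 a a c) S) = (\<lambda>t. \<kappa> * S t)" using sandwich by blast
  have msi': "min_support_interval S p r" using nz cov by (rule min_support_if_covered)
  have "a \<le> c" "p \<le> r" using min_support_less[OF msi] min_support_less[OF msi'] by simp_all
  define GS where "GS = mult3 (e3 a a c) S"
  have GS_apply: "GS (z1, z2, z3) = (if z1 = a \<and> a \<le> z2 \<and> z2 \<le> c \<and> c \<le> z3 then S (a, c, z3) else 0)"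
    for z1 z2 z3 unfolding GS_def mult3_e3_left by simp
  have "\<kappa> = \<kappa> * S (a, a, c)" using min_support_block_eq_1[OF msi] \<open>a \<le> c\<close> by simp
  also have "\<dots> = mult3 S GS (a, a, c)" using \<kappa> unfolding GS_def by simp
  also have "\<dots> = S (a, a, c) * GS (a, c, c)" using msi \<open>a \<le> c\<close> by (rule mult3_at_min_support_left)
  also have "\<dots> = 1" using GS_apply min_support_block_eq_1[OF msi] \<open>a \<le> c\<close> by simp
  finally have "\<kappa> = 1" .
  have "\<kappa> = \<kappa> * S (p, p, r)" using min_support_block_eq_1[OF msi'] \<open>p \<le> r\<close> by simp
  also have "\<dots> = mult3 S GS (p, p, r)" using \<kappa> unfolding GS_def by simp
  also have "\<dots> = S (p, p, r) * GS (p, r, r)" using msi' \<open>p \<le> r\<close> by (rule mult3_at_min_support_left)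
  also have "\<dots> = 0" using GS_apply other by (auto dest: order.antisym)
  finally have "\<kappa> = 0" .
  with \<open>\<kappa> = 1\<close> show False by simp
qed

lemma eq_e3_plus_J32:
  assumes msi: "min_support_interval S a c" and "covered_by a c"
    and unique: "\<And>p q r. S (p, q, r) \<noteq> 0 \<Longrightarrow> covered_by p r \<Longrightarrow> p = a \<and> r = c"
  shows "\<exists>\<sigma>\<in>J32. S = (\<lambda>t. e3 a a c t + e3 a c c t + \<sigma> t)"
proof
  define \<sigma> where "\<sigma> = (\<lambda>t. S t - e3 a a c t - e3 a c c t)"
  show "S = (\<lambda>t. e3 a a c t + e3 a c c t + \<sigma> t)" unfolding \<sigma>_def by simp
  have "a < c" using \<open>covered_by a c\<close> by (rule covered_by_less)
  then have "a \<noteq> c" by simp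
  have \<sigma>_0: "\<sigma> (p, q, r) = 0" if "\<not> (p \<le> q \<and> q \<le> r) \<or> lng p r < 2" for p q r
  proof (cases "p \<le> q \<and> q \<le> r")
    case False
    then show ?thesis using I3_eq_0[OF in_I3] \<open>a < c\<close> by (auto simp: \<sigma>_def e3_def)
  next
    case True
    with that have "lng p r < 2" by blast
    moreover have "p \<le> r" using True order_trans by blast
    ultimately have "p = r \<or> covered_by p r" by (rule lng_less_2_cases)
    then show ?thesis
    proof
      assume "p = r"
      with True have "q = p" by (blast intro: order.antisym)
      with \<open>p = r\<close> show ?thesis using diag \<open>a < c\<close> by (auto simp: \<sigma>_def e3_def)
    next
      assume cov: "covered_by p r"
      show ?thesis
      proof (cases "p = a \<and> r = c")
        case True
        then have "S (p, q, r) = 1" using min_support_block_eq_1[OF msi] \<open>p \<le> q \<and> q \<le> r\<close> by blast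
        moreover have "q = a \<or> q = c" using covered_by_between[OF cov] \<open>p \<le> q \<and> q \<le> r\<close> True by blast
        ultimately show ?thesis using True \<open>a \<noteq> c\<close> by (auto simp: \<sigma>_def e3_def)
      next
        case False
        then have "S (p, q, r) = 0" using unique[OF _ cov] by blast
        with False show ?thesis by (auto simp: \<sigma>_def e3_def)
      qed
    qed
  qed
  then show "\<sigma> \<in> J32" unfolding J32_def I3_def by blast
qed

end

section \<open>Transport along an algebra isomorphism\<close>

context
  fixes \<Phi> :: "('a::{order,finite} \<times> 'a \<times> 'a \<Rightarrow> 'r::comm_ring_1) \<Rightarrow> ('b::{order,finite} \<times> 'b \<times> 'b \<Rightarrow> 'r)"
  assumes iso: "alg_iso3 \<Phi>"
begin

private lemma iso_parts:
  "bij_betw \<Phi> I3 I3"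
  "\<forall>f\<in>I3. \<forall>g\<in>I3. \<Phi> (\<lambda>t. f t + g t) = (\<lambda>t. \<Phi> f t + \<Phi> g t)"
  "\<forall>f\<in>I3. \<forall>c. \<Phi> (\<lambda>t. c * f t) = (\<lambda>t. c * \<Phi> f t)"
  "\<forall>f\<in>I3. \<forall>g\<in>I3. \<Phi> (mult3 f g) = mult3 (\<Phi> f) (\<Phi> g)"
  using iso unfolding alg_iso3_def by simp_all

lemma alg_iso3_in_I3: "f \<in> I3 \<Longrightarrow> \<Phi> f \<in> I3"
  using iso_parts(1) by (blast dest: bij_betwE)

lemma alg_iso3_inj: "f \<in> I3 \<Longrightarrow> g \<in> I3 \<Longrightarrow> \<Phi> f = \<Phi> g \<Longrightarrow> f = g"
  using iso_parts(1) unfolding bij_betw_def by (rule inj_onD[OF conjunct1])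

lemma alg_iso3_surj: "G \<in> I3 \<Longrightarrow> \<exists>g\<in>I3. \<Phi> g = G"
  using iso_parts(1) unfolding bij_betw_def by (metis imageE)

lemma alg_iso3_add: "f \<in> I3 \<Longrightarrow> g \<in> I3 \<Longrightarrow> \<Phi> (\<lambda>t. f t + g t) = (\<lambda>t. \<Phi> f t + \<Phi> g t)"
  by (simp add: iso_parts(2))

lemma alg_iso3_smult: "f \<in> I3 \<Longrightarrow> \<Phi> (\<lambda>t. c * f t) = (\<lambda>t. c * \<Phi> f t)"
  by (simp add: iso_parts(3))

lemma alg_iso3_mult: "f \<in> I3 \<Longrightarrow> g \<in> I3 \<Longrightarrow> \<Phi> (mult3 f g) = mult3 (\<Phi> f) (\<Phi> g)"
  by (simp add: iso_parts(4))

lemma alg_iso3_zero: "\<Phi> (\<lambda>_. 0) = (\<lambda>_. 0)"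
  using alg_iso3_smult[OF zero_in_I3, of 0] by simp

lemma alg_iso3_mult_reflect:
  assumes "f \<in> I3" "g \<in> I3" "h \<in> I3" "mult3 (\<Phi> f) (\<Phi> g) = \<Phi> h"
  shows "mult3 f g = h"
  using assms by (intro alg_iso3_inj) (simp_all add: alg_iso3_mult mult3_in_I3)

lemma alg_iso3_preimage_e3_diag:
  assumes "a < b" "g \<in> I3" "\<Phi> g = e3 a a b"
  shows "g (v, v, v) = 0"
proof -
  obtain k where k: "k \<in> I3" "\<Phi> k = e3 a a a" using alg_iso3_surj[OF e3_in_I3] by blast
  have e3_prods: "mult3 (e3 a a a) (e3 a a b) = e3 a a b" "mult3 (e3 a a b) (e3 a a a) = (\<lambda>_. 0)"
    unfolding mult3_e3_left using assms(1) by (auto simp: e3_def fun_eq_iff)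
  have "mult3 k g = g"
    using k(1) assms(2) assms(2) by (rule alg_iso3_mult_reflect) (simp add: k(2) assms(3) e3_prods)
  moreover have "mult3 g k = (\<lambda>_. 0)"
    using assms(2) k(1) zero_in_I3
    by (rule alg_iso3_mult_reflect) (simp add: k(2) assms(3) e3_prods alg_iso3_zero)
  ultimately show ?thesis by (rule diag_eq_0_if_absorbed)
qed

context
  fixes x y :: 'a
  assumes cov: "covered_by x y"
begin

private lemma edge_in_I3: "edge3 x y \<in> I3"
  using covered_by_less[OF cov] by (simp add: edge3_in_I3)

lemma alg_iso3_edge3_nonzero: "\<Phi> (edge3 x y) \<noteq> (\<lambda>_. 0)"
  using alg_iso3_inj[OF edge_in_I3 zero_in_I3] edge3_nonzero less_imp_neq[OF covered_by_less[OF cov]]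
  by (auto simp: alg_iso3_zero)

lemma alg_iso3_edge3_zero_diag_idempotent:
  assumes "indecomposable TYPE('r)"
  shows "zero_diag_idempotent (\<Phi> (edge3 x y))"
proof
  let ?S = "\<Phi> (edge3 x y)" and ?dx = "\<Phi> (e3 x x x)" and ?dy = "\<Phi> (e3 y y y)"
  have dI: "e3 x x x \<in> I3" "e3 y y y \<in> I3" by (simp_all add: e3_in_I3)
  show "mult3 ?S ?S = ?S"
    using alg_iso3_mult[OF edge_in_I3 edge_in_I3] by (simp add: mult3_edge3_idem[OF cov])
  have "?S = \<Phi> (\<lambda>t. mult3 (e3 x x x) (edge3 x y) t + mult3 (edge3 x y) (e3 y y y) t)"
    by (subst edge3_split[OF cov]) (rule refl)
  also have "\<dots> = (\<lambda>t. mult3 ?dx ?S t + mult3 ?S ?dy t)"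
    by (simp add: alg_iso3_add alg_iso3_mult mult3_in_I3 dI edge_in_I3)
  finally have split: "?S = (\<lambda>t. mult3 ?dx ?S t + mult3 ?S ?dy t)" .
  have "mult3 ?S ?dx = \<Phi> (mult3 (edge3 x y) (e3 x x x))"
    by (rule alg_iso3_mult[OF edge_in_I3 dI(1), symmetric])
  also have "\<dots> = (\<lambda>_. 0)" by (simp add: mult3_edge3_e3_bottom_eq_0[OF cov] alg_iso3_zero)
  finally have "mult3 ?S ?dx = (\<lambda>_. 0)" .
  have "mult3 ?dy ?S = \<Phi> (mult3 (e3 y y y) (edge3 x y))"
    by (rule alg_iso3_mult[OF dI(2) edge_in_I3, symmetric])
  also have "\<dots> = (\<lambda>_. 0)" by (simp add: mult3_e3_top_edge3_eq_0[OF cov] alg_iso3_zero)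
  finally have "mult3 ?dy ?S = (\<lambda>_. 0)" .
  with split \<open>mult3 ?S ?dx = (\<lambda>_. 0)\<close> show "?S (v, v, v) = 0" for v by (intro diag_eq_0_if_split)
qed (simp_all add: assms alg_iso3_in_I3 edge_in_I3)

lemma alg_iso3_edge3_sandwich:
  assumes "G \<in> I3"
  shows "\<exists>\<kappa>. mult3 (\<Phi> (edge3 x y)) (mult3 G (\<Phi> (edge3 x y))) = (\<lambda>t. \<kappa> * \<Phi> (edge3 x y) t)"
proof -
  obtain g where "g \<in> I3" "\<Phi> g = G" using alg_iso3_surj[OF assms] by blast
  then have "mult3 (\<Phi> (edge3 x y)) (mult3 G (\<Phi> (edge3 x y))) =
      \<Phi> (mult3 (edge3 x y) (mult3 g (edge3 x y)))"
    by (simp add: alg_iso3_mult mult3_in_I3 edge_in_I3)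
  also have "\<dots> = (\<lambda>t. g (x, x, y) * \<Phi> (edge3 x y) t)"
    by (simp add: mult3_edge3_sandwich[OF cov] alg_iso3_smult edge_in_I3)
  finally show ?thesis by blast
qed

lemma alg_iso3_edge3_sandwich_right:
  assumes "a < b"
  shows "mult3 (\<Phi> (edge3 x y)) (mult3 (mult3 (e3 a a b) (\<Phi> (edge3 x y))) (\<Phi> (edge3 x y))) =
         mult3 (\<Phi> (edge3 x y)) (mult3 (e3 a a b) (\<Phi> (edge3 x y)))"
proof -
  obtain g where g: "g \<in> I3" "\<Phi> g = e3 a a b"
    using alg_iso3_surj[OF e3_in_I3] assms by (meson less_imp_le order_refl)
  then have "g (x, x, x) = 0" using assms by (intro alg_iso3_preimage_e3_diag)
  have "mult3 (\<Phi> (edge3 x y)) (mult3 (mult3 (e3 a a b) (\<Phi> (edge3 x y))) (\<Phi> (edge3 x y))) =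
      \<Phi> (mult3 (edge3 x y) (mult3 (mult3 g (edge3 x y)) (edge3 x y)))"
    using g by (simp add: alg_iso3_mult mult3_in_I3 edge_in_I3)
  also have "\<dots> = \<Phi> (mult3 (edge3 x y) (mult3 g (edge3 x y)))"
    using mult3_edge3_sandwich_right[OF cov, where g = g] \<open>g (x, x, x) = 0\<close> by simp
  also have "\<dots> = mult3 (\<Phi> (edge3 x y)) (mult3 (e3 a a b) (\<Phi> (edge3 x y)))"
    using g by (simp add: alg_iso3_mult mult3_in_I3 edge_in_I3)
  finally show ?thesis .
qed

end

lemma alg_iso3_edge3:
  assumes "indecomposable TYPE('r)" "covered_by x y"
  shows "\<exists>u v. covered_by u v \<and> (\<exists>\<sigma>\<in>J32. \<Phi> (edge3 x y) = (\<lambda>t. e3 u u v t + e3 u v v t + \<sigma> t))"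
proof -
  interpret S: zero_diag_idempotent "\<Phi> (edge3 x y)"
    by (rule alg_iso3_edge3_zero_diag_idempotent[OF assms(2,1)])
  obtain a c where msi: "min_support_interval (\<Phi> (edge3 x y)) a c"
    using ex_min_support_interval[OF S.in_I3 alg_iso3_edge3_nonzero[OF assms(2)]] by blast
  have cov: "covered_by a c"
    using msi alg_iso3_edge3_sandwich_right[OF assms(2)] by (rule S.min_support_covered)
  then have "e3 a a c \<in> I3" by (simp add: e3_in_I3 covered_by_less less_imp_le)
  then have sandwich:
      "\<exists>\<kappa>. mult3 (\<Phi> (edge3 x y)) (mult3 (e3 a a c) (\<Phi> (edge3 x y))) = (\<lambda>t. \<kappa> * \<Phi> (edge3 x y) t)"
    by (rule alg_iso3_edge3_sandwich[OF assms(2)])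
  have "p = a \<and> r = c" if "\<Phi> (edge3 x y) (p, q, r) \<noteq> 0" "covered_by p r" for p q r
    using msi sandwich that by (rule S.covered_support_unique)
  with cov show ?thesis using S.eq_e3_plus_J32[OF msi cov] by blast
qed

end

theorem corollary3p3:
  fixes \<Phi> :: "('a::{order,finite} \<times> 'a \<times> 'a \<Rightarrow> 'r::comm_ring_1) \<Rightarrow> ('b::{order,finite} \<times> 'b \<times> 'b \<Rightarrow> 'r)"
  assumes "indecomposable TYPE('r)"
    and "alg_iso3 \<Phi>"
  shows "\<forall>x y :: 'a. x < y \<and> lng x y = 1 \<longrightarrow>
           (\<exists>u v :: 'b. u < v \<and> lng u v = 1 \<and>
              (\<exists>\<sigma> \<in> J32. \<Phi> (\<lambda>t. e3 x x y t + e3 x y y t) = (\<lambda>t. e3 u u v t + e3 u v v t + \<sigma> t)))"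
proof -
  have "\<exists>u v. u < v \<and> covered_by u v \<and>
      (\<exists>\<sigma>\<in>J32. \<Phi> (edge3 x y) = (\<lambda>t. e3 u u v t + e3 u v v t + \<sigma> t))"
    if "covered_by x y" for x y
    using alg_iso3_edge3[OF assms(2,1) that] covered_by_less by blast
  then show ?thesis unfolding lng_eq_1_iff edge3_def by blast
qed

end
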